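(* Let $h,k\ge 2$, $w=a^hb^k$, and for $n\ge1$ let $S_n = a^h(a^{2h}b^{2k})(aba^{h-1}b^{k-1})^{n}(a^{2h}b^{2k})b^k$. For all integers $i,j\ge1$, $S_i \vdash^*_{\{w\}} S_j$ if and only if $i=j$.
   Context: For words $u,v$, the shuffle $u \sqcup\!\sqcup v$ is the set of all words $u_1v_1\cdots u_kv_k$ with $k\ge 1$, $u=u_1\cdots u_k$, $v=v_1\cdots v_k$ (pieces possibly empty). For a finite set $I$ of words, $v \vdash_I w$ means $w \in v \sqcup\!\sqcup u$ for some $u\in I$, and $\vdash_I^*$ is its reflexive-transitive closure. *)

theory Defs
  imports Main
begin

datatype letter = A | B

definition shuffle :: "'a list \<Rightarrow> 'a list \<Rightarrow> 'a list set" where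
  "shuffle u v = {w. \<exists>us vs. length us = length vs \<and> length us \<ge> 1 \<and>
      u = concat us \<and> v = concat vs \<and> w = concat (map (\<lambda>(x, y). x @ y) (zip us vs))}"

definition ins_step :: "'a list set \<Rightarrow> 'a list \<Rightarrow> 'a list \<Rightarrow> bool" where
  "ins_step I v w \<longleftrightarrow> (\<exists>u\<in>I. w \<in> shuffle v u)"

definition ins_star :: "'a list set \<Rightarrow> 'a list \<Rightarrow> 'a list \<Rightarrow> bool" where
  "ins_star I = (ins_step I)\<^sup>*\<^sup>*"

definition S_word :: "nat \<Rightarrow> nat \<Rightarrow> nat \<Rightarrow> letter list" where
  "S_word h k n = replicate h A @ (replicate (2*h) A @ replicate (2*k) B)
     @ concat (replicate n ([A, B] @ replicate (h - 1) A @ replicate (k - 1) B))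
     @ (replicate (2*h) A @ replicate (2*k) B) @ replicate k B"

end

theory Submission
  imports Defs "HOL-Library.Sublist"
begin

text \<open>
  A derivation from \<open>x\<close> to \<open>y\<close> by insertions of \<open>w = a^h b^k\<close> is recorded by a
  colouring of \<open>y\<close> that marks every letter as original (coming from \<open>x\<close>) or inserted.
  As the inserted letters form a shuffle of copies of \<open>w\<close>, every prefix of a colouring
  contains admissible numbers \<open>\<alpha>\<close>, \<open>\<beta>\<close> of inserted \<open>a\<close>'s and \<open>b\<close>'s:
  \<open>\<beta> > 0\<close> forces \<open>\<alpha> \<ge> h\<close>, and \<open>h \<beta> \<le> k \<alpha>\<close>.

  Suppose \<open>S_i \<turnstile>* S_j\<close>. Counting letters gives \<open>i \<le> j\<close> with \<open>(j - i) h\<close> inserted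
  \<open>a\<close>'s. The weight \<open>k |y|_a - h |y|_b\<close> of a prefix \<open>y\<close> of \<open>S_j\<close> is at most \<open>3hk\<close>,
  with equality only right after the leading \<open>a^(3h)\<close> or after the final \<open>a\<close>-block,
  whereas by admissibility the prefix preceding the first original \<open>b\<close> has weight at
  least \<open>3hk\<close>; hence the leading \<open>a^(3h) b^(2k)\<close> of \<open>S_j\<close> is original. Admissibility
  also shows that a block \<open>a b a^(h-1) b^(k-1)\<close> at the front of both words is original,
  which strips the \<open>i\<close> blocks of \<open>S_i\<close> one by one. If \<open>i < j\<close>, there remains a
  colouring of a word beginning with \<open>ab\<close> over \<open>a^(2h) b^(3k)\<close>; its first two letters
  would have to be original, but the original word begins with \<open>aa\<close>.
\<close>

lemma count_list_replicate [simp]: "count_list (replicate n x) y = (if x = y then n else 0)"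
  by (induction n) auto

lemma count_list_concat_replicate:
  "count_list (concat (replicate n xs)) x = n * count_list xs x"
  by (induction n) auto

lemma count_list_prefix_le: "prefix xs ys \<Longrightarrow> count_list xs x \<le> count_list ys x"
  by (auto simp: prefix_def)

lemma prefix_replicate: "prefix p (replicate n x) \<longleftrightarrow> (\<exists>m\<le>n. p = replicate m x)"
proof
  assume p: "prefix p (replicate n x)"
  then have "set p \<subseteq> {x}"
    using set_mono_prefix by fastforce
  with p show "\<exists>m\<le>n. p = replicate m x"
    by (metis prefix_length_le length_replicate replicate_eqI singletonD subsetD)
next
  assume "\<exists>m\<le>n. p = replicate m x"
  then show "prefix p (replicate n x)"
    by (metis le_add_diff_inverse prefixI replicate_add)
qed

lemma prefix_butlast_if_shorter:
  "prefix xs (ys @ zs) \<Longrightarrow> length xs < length ys \<Longrightarrow> prefix xs (butlast ys)"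
  by (cases ys rule: rev_cases) (auto simp: prefix_append dest: prefix_length_le)

section \<open>Shuffles\<close>

lemma append_in_shuffles:
  "xs \<in> shuffles xs1 ys1 \<Longrightarrow> zs \<in> shuffles xs2 ys2 \<Longrightarrow>
   xs @ zs \<in> shuffles (xs1 @ xs2) (ys1 @ ys2)"
proof (induction xs arbitrary: xs1 ys1)
  case Nil
  then show ?case by simp
next
  case (Cons x xs)
  from Cons.prems(1) consider
      xs1' where "xs1 = x # xs1'" "xs \<in> shuffles xs1' ys1"
    | ys1' where "ys1 = x # ys1'" "xs \<in> shuffles xs1 ys1'"
    by (cases xs1; cases ys1) (auto simp: Cons_in_shuffles_iff)
  then show ?case
    by cases (auto intro: Cons_in_shuffles_leftI Cons_in_shuffles_rightI Cons.IH Cons.prems(2))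
qed

lemma concat_zip_in_shuffles:
  "length us = length vs \<Longrightarrow>
   concat (map (\<lambda>(x, y). x @ y) (zip us vs)) \<in> shuffles (concat us) (concat vs)"
proof (induction us vs rule: list_induct2)
  case (Cons u us v vs)
  have "u @ v \<in> shuffles u v"
    using append_in_shuffles[of u u "[]" v "[]" v] by simp
  with Cons.IH show ?case
    using append_in_shuffles by fastforce
qed simp

lemma shuffle_subset_shuffles: "shuffle u v \<subseteq> shuffles u v"
  unfolding shuffle_def using concat_zip_in_shuffles by blast

lemma count_list_shuffles:
  "zs \<in> shuffles xs ys \<Longrightarrow> count_list zs x = count_list xs x + count_list ys x"
  by (induction xs ys arbitrary: zs rule: shuffles.induct) auto

lemma prefix_shuffles:
  assumes "zs \<in> shuffles xs ys" "prefix p zs"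
  shows "\<exists>p1 p2. prefix p1 xs \<and> prefix p2 ys \<and> p \<in> shuffles p1 p2"
  using assms
proof (induction zs arbitrary: xs ys p)
  case Nil
  then show ?case by auto
next
  case (Cons z zs)
  show ?case
  proof (cases p)
    case Nil
    then show ?thesis by force
  next
    case (Cons z' p')
    with Cons.prems(2) have p: "p = z # p'" "prefix p' zs" by auto
    from Cons.prems(1) consider
        xs' where "xs = z # xs'" "zs \<in> shuffles xs' ys"
      | ys' where "ys = z # ys'" "zs \<in> shuffles xs ys'"
      by (cases xs; cases ys) (auto simp: Cons_in_shuffles_iff)
    then show ?thesis
    proof cases
      case 1
      with Cons.IH p obtain p1 p2 where "prefix p1 xs'" "prefix p2 ys" "p' \<in> shuffles p1 p2"
        by blast
      with 1 p show ?thesis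
        by (intro exI[of _ "z # p1"] exI[of _ p2]) (auto intro: Cons_in_shuffles_leftI)
    next
      case 2
      with Cons.IH p obtain p1 p2 where "prefix p1 xs" "prefix p2 ys'" "p' \<in> shuffles p1 p2"
        by blast
      with 2 p show ?thesis
        by (intro exI[of _ p1] exI[of _ "z # p2"]) (auto intro: Cons_in_shuffles_rightI)
    qed
  qed
qed

lemma shuffles_map:
  "zs \<in> shuffles (map f xs) (map f ys) \<Longrightarrow> \<exists>zs' \<in> shuffles xs ys. map f zs' = zs"
proof (induction zs arbitrary: xs ys)
  case Nil
  then show ?case by simp
next
  case (Cons z zs)
  from Cons.prems consider
      x xs' where "xs = x # xs'" "f x = z" "zs \<in> shuffles (map f xs') (map f ys)"
    | y ys' where "ys = y # ys'" "f y = z" "zs \<in> shuffles (map f xs) (map f ys')"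
    by (cases xs; cases ys) (auto simp: Cons_in_shuffles_iff)
  then show ?case
  proof cases
    case 1
    with Cons.IH obtain zs' where "zs' \<in> shuffles xs' ys" "map f zs' = zs" by blast
    with 1 show ?thesis by (intro bexI[of _ "x # zs'"]) (auto intro: Cons_in_shuffles_leftI)
  next
    case 2
    with Cons.IH obtain zs' where "zs' \<in> shuffles xs ys'" "map f zs' = zs" by blast
    with 2 show ?thesis by (intro bexI[of _ "y # zs'"]) (auto intro: Cons_in_shuffles_rightI)
  qed
qed

section \<open>Colourings of insertion derivations\<close>

definition original :: "('a \<times> bool) list \<Rightarrow> 'a list" where
  "original c = map fst (filter (\<lambda>x. \<not> snd x) c)"

abbreviation inserted :: "('a \<times> bool) list \<Rightarrow> 'a \<Rightarrow> nat" where
  "inserted c x \<equiv> count_list c (x, True)"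

lemma original_append [simp]: "original (xs @ ys) = original xs @ original ys"
  by (simp add: original_def)

lemma count_list_map_fst: "count_list (map fst c) x = count_list (original c) x + inserted c x"
  by (induction c) (auto simp: original_def)

lemma original_shuffles_inserted:
  "c' \<in> shuffles c (map (\<lambda>x. (x, True)) w) \<Longrightarrow> original c' = original c"
  using filter_shuffles[of "\<lambda>x. \<not> snd x" c "map (\<lambda>x. (x, True)) w"]
  by (simp add: original_def comp_def) (metis image_eqI singletonD)

lemma prefix_original: "prefix p c \<Longrightarrow> prefix (original p) (original c)"
  by (auto simp: original_def intro: map_mono_prefix filter_mono_prefix)

lemma original_eq_map_fst:
  "inserted c A = 0 \<Longrightarrow> inserted c B = 0 \<Longrightarrow> original c = map fst c"
proof (induction c)
  case (Cons x c)
  then show ?case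
    by (cases x; cases "fst x") (auto simp: original_def split: if_splits)
qed (simp add: original_def)

lemma length_original_less:
  assumes "0 < inserted c x"
  shows "length (original c) < length c"
proof -
  from assms have "(x, True) \<in> set c"
    by (metis count_notin less_irrefl)
  then show ?thesis
    unfolding original_def by (simp add: length_filter_less)
qed

lemma original_eq_append_Cons:
  "original c = xs @ x # ys \<Longrightarrow> \<exists>c1 c2. c = c1 @ (x, False) # c2 \<and> original c1 = xs"
proof (induction c arbitrary: xs)
  case Nil
  then show ?case by (simp add: original_def)
next
  case (Cons y c)
  obtain l b where y: "y = (l, b)" by fastforce
  show ?case
  proof (cases b)
    case True
    with Cons obtain c1 c2 where "c = c1 @ (x, False) # c2" "original c1 = xs"
      by (auto simp: y original_def)
    with y True show ?thesis
      by (intro exI[of _ "y # c1"] exI[of _ c2]) (simp add: original_def)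
  next
    case False
    show ?thesis
    proof (cases xs)
      case Nil
      with Cons.prems y False show ?thesis
        by (intro exI[of _ "[]"] exI[of _ c]) (simp add: original_def)
    next
      case (Cons x' xs')
      with Cons.prems Cons.IH[of xs'] y False obtain c1 c2
        where "c = c1 @ (x, False) # c2" "original c1 = xs'" "x' = l"
        by (auto simp: original_def)
      with y False Cons show ?thesis
        by (intro exI[of _ "y # c1"] exI[of _ c2]) (simp add: original_def)
    qed
  qed
qed

definition admissible :: "nat \<Rightarrow> nat \<Rightarrow> nat \<Rightarrow> nat \<Rightarrow> bool" where
  "admissible h k a b \<longleftrightarrow> (0 < b \<longrightarrow> h \<le> a) \<and> h * b \<le> k * a"

lemma admissible_add:
  "admissible h k a b \<Longrightarrow> admissible h k a' b' \<Longrightarrow> admissible h k (a + a') (b + b')"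
  by (auto simp: admissible_def algebra_simps)

lemma admissible_prefix_word:
  assumes "prefix p (replicate h A @ replicate k B)"
  shows "admissible h k (count_list p A) (count_list p B)"
proof -
  from assms consider s where "p = replicate s A" "s \<le> h"
    | t where "p = replicate h A @ replicate t B" "t \<le> k"
    by (auto simp: prefix_append prefix_replicate)
  then show ?thesis
    by cases (auto simp: admissible_def mult.commute)
qed

definition well_inserted :: "nat \<Rightarrow> nat \<Rightarrow> (letter \<times> bool) list \<Rightarrow> bool" where
  "well_inserted h k c \<longleftrightarrow> (\<forall>p. prefix p c \<longrightarrow> admissible h k (inserted p A) (inserted p B))"

lemma well_inserted_shuffles:
  assumes "well_inserted h k c"
    and "c' \<in> shuffles c (map (\<lambda>x. (x, True)) (replicate h A @ replicate k B))"
  shows "well_inserted h k c'"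
  unfolding well_inserted_def
proof (intro allI impI)
  fix p
  assume "prefix p c'"
  with assms(2) obtain p1 p2 where p1: "prefix p1 c"
    and p2: "prefix p2 (map (\<lambda>x. (x, True)) (replicate h A @ replicate k B))"
    and p: "p \<in> shuffles p1 p2"
    using prefix_shuffles by blast
  from prefix_map_rightE[OF p2] obtain q
    where q: "prefix q (replicate h A @ replicate k B)" "p2 = map (\<lambda>x. (x, True)) q"
    by blast
  have "inserted p2 x = count_list q x" for x
    using q(2) count_list_map_conv[of "\<lambda>x. (x, True)"] by (simp add: inj_def)
  then have "admissible h k (inserted p2 A) (inserted p2 B)"
    using admissible_prefix_word[OF q(1)] by simp
  moreover have "admissible h k (inserted p1 A) (inserted p1 B)"
    using assms(1) p1 by (simp add: well_inserted_def)
  ultimately show "admissible h k (inserted p A) (inserted p B)"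
    using admissible_add count_list_shuffles[OF p] by simp
qed

definition colouring ::
  "nat \<Rightarrow> nat \<Rightarrow> (letter \<times> bool) list \<Rightarrow> letter list \<Rightarrow> letter list \<Rightarrow> bool" where
  "colouring h k c y x \<longleftrightarrow> well_inserted h k c \<and> map fst c = y \<and> original c = x"

lemma ins_star_colouring:
  assumes "ins_star {replicate h A @ replicate k B} x y"
  shows "\<exists>c. colouring h k c y x"
  using assms unfolding ins_star_def
proof (induction rule: rtranclp_induct)
  case base
  have no_inserted: "inserted (map (\<lambda>l. (l, False)) p) y = 0" for p y
    by (induction p) auto
  have "well_inserted h k (map (\<lambda>l. (l, False)) x)"
    by (auto simp: well_inserted_def admissible_def no_inserted dest!: prefix_map_rightE)
  then have "colouring h k (map (\<lambda>l. (l, False)) x) x x"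
    by (simp add: colouring_def original_def comp_def)
  then show ?case ..
next
  case (step y z)
  then obtain c where c: "colouring h k c y x" by blast
  let ?w = "map (\<lambda>l. (l, True)) (replicate h A @ replicate k B)"
  from step.hyps(2) have "z \<in> shuffles (map fst c) (map fst ?w)"
    using c shuffle_subset_shuffles by (auto simp: ins_step_def colouring_def comp_def)
  then obtain c' where c': "c' \<in> shuffles c ?w" "map fst c' = z"
    using shuffles_map by blast
  with c have "colouring h k c' z x"
    using well_inserted_shuffles[OF _ c'(1)] original_shuffles_inserted[OF c'(1)]
    by (simp add: colouring_def)
  then show ?case ..
qed

lemma inserted_B_eq_0:
  assumes "well_inserted h k c" "prefix p c" "inserted p A < h"
  shows "inserted p B = 0"
  using assms by (auto simp: well_inserted_def admissible_def)

lemma colouring_drop_kept: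
  assumes "colouring h k c (u @ ys) (u @ xs)"
    and "inserted (take (length u) c) A = 0" "inserted (take (length u) c) B = 0"
  shows "colouring h k (drop (length u) c) ys xs"
proof -
  let ?n = "length u"
  from assms(1) have c: "well_inserted h k c" "map fst c = u @ ys" "original c = u @ xs"
    by (simp_all add: colouring_def)
  have "original (take ?n c) = take ?n (map fst c)"
    using original_eq_map_fst[OF assms(2,3)] by (simp add: take_map)
  also have "\<dots> = u"
    using c(2) by simp
  finally have "original (drop ?n c) = xs"
    using c(3) by (metis append_take_drop_id original_append same_append_eq)
  moreover have "map fst (drop ?n c) = ys"
    using c(2) by (simp add: drop_map[symmetric])
  moreover have "well_inserted h k (drop ?n c)"
    unfolding well_inserted_def
  proof (intro allI impI)
    fix p
    assume "prefix p (drop ?n c)"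
    then have "prefix (take ?n c @ p) c"
      by (metis append_take_drop_id same_prefix_prefix)
    with c(1) assms(2,3) show "admissible h k (inserted p A) (inserted p B)"
      by (auto simp: well_inserted_def)
  qed
  ultimately show ?thesis
    by (simp add: colouring_def)
qed

lemma colouring_drop_B_run:
  assumes "colouring h k c (replicate t B @ ys) (replicate t B @ xs)" "0 < h"
  shows "colouring h k (drop t c) ys xs"
proof -
  have c: "well_inserted h k c" "map fst c = replicate t B @ ys"
    using assms(1) by (simp_all add: colouring_def)
  have "count_list (map fst (take t c)) A = 0"
    using c(2) by (simp add: take_map[symmetric])
  then have "inserted (take t c) A = 0"
    using count_list_map_fst[of "take t c" A] by simp
  moreover from this have "inserted (take t c) B = 0"
    using inserted_B_eq_0[OF c(1) take_is_prefix] assms(2) by simp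
  ultimately show ?thesis
    using colouring_drop_kept[OF assms(1)] by simp
qed

section \<open>The words \<open>S\<^sub>n\<close>\<close>

definition block :: "nat \<Rightarrow> nat \<Rightarrow> letter list" where
  "block h k = [A, B] @ replicate (h - 1) A @ replicate (k - 1) B"

lemma S_word_eq:
  "S_word h k n = replicate (3 * h) A @ replicate (2 * k) B @ concat (replicate n (block h k))
     @ replicate (2 * h) A @ replicate (3 * k) B"
  by (simp add: S_word_def block_def replicate_add[symmetric])

lemma length_block: "0 < h \<Longrightarrow> 0 < k \<Longrightarrow> length (block h k) = h + k"
  by (simp add: block_def)

lemma count_list_block:
  "0 < h \<Longrightarrow> 0 < k \<Longrightarrow> count_list (block h k) A = h \<and> count_list (block h k) B = k"
  by (simp add: block_def)

lemma count_list_S_word: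
  "0 < h \<Longrightarrow> 0 < k \<Longrightarrow>
   count_list (S_word h k n) A = (5 + n) * h \<and> count_list (S_word h k n) B = (5 + n) * k"
  by (simp add: S_word_eq count_list_concat_replicate count_list_block algebra_simps)

lemma first_two_kept:
  assumes "colouring h k c (A # B # ys) (A # xs)" "2 \<le> h"
  shows "original (take 2 c) = [A, B]"
proof -
  let ?q = "take 2 c"
  from assms(1) have c: "well_inserted h k c" "map fst c = A # B # ys" "original c = A # xs"
    by (simp_all add: colouring_def)
  have mq: "map fst ?q = [A, B]"
    using c(2) by (simp add: take_map[symmetric])
  have cnt: "count_list [A, B] x = count_list (original ?q) x + inserted ?q x" for x
    using count_list_map_fst[of ?q x] mq by simp
  have "inserted ?q B = 0"
    using inserted_B_eq_0[OF c(1) take_is_prefix] cnt[of A] assms(2) by simp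
  then have "original ?q \<noteq> []"
    using cnt[of B] by auto
  moreover have "prefix (original ?q) (A # xs)"
    using prefix_original[OF take_is_prefix] c(3) by metis
  ultimately have "count_list (original ?q) A \<noteq> 0"
    by (auto simp: prefix_Cons)
  then have "inserted ?q A = 0"
    using cnt[of A] by simp
  with \<open>inserted ?q B = 0\<close> show ?thesis
    using original_eq_map_fst mq by simp
qed

lemma not_colouring_AB_AA:
  assumes "2 \<le> h"
  shows "\<not> colouring h k c (A # B # ys) (A # A # xs)"
proof
  assume c: "colouring h k c (A # B # ys) (A # A # xs)"
  then have "original (take 2 c) = [A, B]"
    using first_two_kept assms by blast
  moreover have "prefix (original (take 2 c)) (A # A # xs)"
    using c prefix_original[OF take_is_prefix, of 2 c] by (simp add: colouring_def)
  ultimately show False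
    by simp
qed

lemma count_list_B_short_prefix_block:
  assumes "prefix u (block h k @ xs)" "length u < length (block h k)" "2 \<le> k"
  shows "count_list u B < k"
proof -
  have "prefix u (butlast (block h k))"
    using prefix_butlast_if_shorter assms(1,2) by blast
  moreover have "count_list (butlast (block h k)) B = k - 1"
    using assms(3) by (simp add: block_def butlast_append butlast_conv_take[of "replicate _ _"])
  ultimately show ?thesis
    using count_list_prefix_le[of u "butlast (block h k)" B] assms(3) by simp
qed

lemma colouring_drop_block:
  assumes "colouring h k c (block h k @ ys) (block h k @ xs)" "2 \<le> h" "2 \<le> k"
  shows "colouring h k (drop (h + k) c) ys xs"
proof -
  let ?p = "take (h + k) c"
  from assms(1) have c: "well_inserted h k c" "map fst c = block h k @ ys"
    "original c = block h k @ xs"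
    by (simp_all add: colouring_def)
  have len: "length (block h k) = h + k"
    and cnt_block: "count_list (block h k) A = h" "count_list (block h k) B = k"
    using assms(2,3) length_block count_list_block by auto
  have mp: "map fst ?p = block h k"
    using c(2) len by (simp add: take_map[symmetric])
  have cnt: "count_list (block h k) x = count_list (original ?p) x + inserted ?p x" for x
    using count_list_map_fst[of ?p x] mp by simp
  have "original (take 2 c) = [A, B]"
    using first_two_kept[of h k c] assms by (simp add: block_def)
  moreover have "take 2 c = take 2 ?p"
    using assms(2) by simp
  ultimately have "prefix [A, B] (original ?p)"
    by (metis append_take_drop_id original_append prefixI)
  then have "inserted ?p A < h"
    using cnt[of A] cnt_block count_list_prefix_le[of "[A, B]" "original ?p" A] by simp
  then have B0: "inserted ?p B = 0"
    using inserted_B_eq_0[OF c(1) take_is_prefix] by simp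
  have "inserted ?p A = 0"
  proof (rule ccontr)
    assume "inserted ?p A \<noteq> 0"
    then have "length (original ?p) < length (block h k)"
      using length_original_less[of ?p A] len c(2) by (simp add: arg_cong[OF c(2), of length])
    moreover have "prefix (original ?p) (block h k @ xs)"
      using prefix_original[OF take_is_prefix] c(3) by metis
    ultimately have "count_list (original ?p) B < k"
      using count_list_B_short_prefix_block assms(3) by blast
    then show False
      using cnt[of B] cnt_block B0 by simp
  qed
  with B0 show ?thesis
    using colouring_drop_kept[of h k c "block h k"] assms(1) len by simp
qed

lemma colouring_drop_blocks:
  assumes "colouring h k c
    (concat (replicate n (block h k)) @ ys) (concat (replicate n (block h k)) @ xs)"
    and "2 \<le> h" "2 \<le> k"
  shows "colouring h k (drop (n * (h + k)) c) ys xs"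
  using assms(1)
proof (induction n arbitrary: c)
  case (Suc n)
  then have "colouring h k (drop (h + k) c)
      (concat (replicate n (block h k)) @ ys) (concat (replicate n (block h k)) @ xs)"
    using colouring_drop_block assms(2,3) by simp
  then have "colouring h k (drop (n * (h + k)) (drop (h + k) c)) ys xs"
    by (rule Suc.IH)
  then show ?case
    by (simp add: add.commute)
qed simp

definition weight :: "nat \<Rightarrow> nat \<Rightarrow> letter list \<Rightarrow> int" where
  "weight h k y = int k * int (count_list y A) - int h * int (count_list y B)"

lemma weight_Nil [simp]: "weight h k [] = 0"
  by (simp add: weight_def)

lemma weight_append [simp]: "weight h k (xs @ ys) = weight h k xs + weight h k ys"
  by (simp add: weight_def algebra_simps)

lemma weight_prefix_concat_replicate:
  assumes "\<And>q. prefix q u \<Longrightarrow> weight h k q \<le> M" "weight h k u = 0"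
    and "prefix y (concat (replicate n u))"
  shows "weight h k y \<le> M"
  using assms(3)
proof (induction n arbitrary: y)
  case 0
  then show ?case
    using assms(1)[of "[]"] by simp
next
  case (Suc n)
  then consider "prefix y u" | us where "y = u @ us" "prefix us (concat (replicate n u))"
    by (auto simp: prefix_append)
  then show ?case
    by cases (use assms Suc.IH in auto)
qed

lemma weight_prefix_block:
  assumes "0 < h" "0 < k" "prefix q (block h k)"
  shows "weight h k q \<le> int h * int k"
proof -
  have "count_list q A \<le> h"
    using count_list_prefix_le[OF assms(3), of A] count_list_block[OF assms(1,2)] by simp
  then have "k * count_list q A \<le> h * k"
    by (simp add: mult.commute)
  then have "int k * int (count_list q A) \<le> int h * int k"
    by (metis of_nat_le_iff of_nat_mult)
  moreover have "0 \<le> int h * int (count_list q B)"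
    by simp
  ultimately show ?thesis
    unfolding weight_def by linarith
qed

lemma prefix_S_word_cases:
  assumes "prefix y (S_word h k n)"
  obtains (A_head) s where "y = replicate s A" "s \<le> 3 * h"
  | (B_head) t where "y = replicate (3 * h) A @ replicate t B" "t \<le> 2 * k"
  | (blocks) y' where "y = replicate (3 * h) A @ replicate (2 * k) B @ y'"
      "prefix y' (concat (replicate n (block h k)))"
  | (A_tail) s where "y = replicate (3 * h) A @ replicate (2 * k) B @ concat (replicate n (block h k))
      @ replicate s A" "s \<le> 2 * h"
  | (B_tail) t where "y = replicate (3 * h) A @ replicate (2 * k) B @ concat (replicate n (block h k))
      @ replicate (2 * h) A @ replicate t B" "t \<le> 3 * k"
  using assms unfolding S_word_eq by (auto simp: prefix_append prefix_replicate)

lemma weight_prefix_S_word: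
  assumes "0 < h" "0 < k" "prefix y (S_word h k n)"
  shows "weight h k y \<le> 3 * int h * int k \<and>
    (weight h k y = 3 * int h * int k \<longrightarrow> count_list y B = 0 \<or> count_list y A = (5 + n) * h)"
proof -
  let ?C = "concat (replicate n (block h k))"
  have rep: "weight h k (replicate s A) = int k * int s"
    "weight h k (replicate s B) = - int h * int s" for s
    by (simp_all add: weight_def)
  have block: "weight h k (block h k) = 0"
    using count_list_block[OF assms(1,2)] by (simp add: weight_def)
  then have C: "weight h k ?C = 0"
    by (induction n) simp_all
  have count_C: "count_list ?C A = n * h"
    using count_list_block[OF assms(1,2)] by (simp add: count_list_concat_replicate)
  from assms(3) show ?thesis
  proof (cases rule: prefix_S_word_cases)
    case (A_head s)
    have "int k * int s \<le> int k * (3 * int h)"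
      using A_head(2) by (intro mult_left_mono) simp_all
    then show ?thesis
      using A_head(1) rep by (simp add: algebra_simps)
  next
    case (B_head t)
    then show ?thesis
      using rep assms(1) by (auto simp: algebra_simps)
  next
    case (blocks y')
    have "weight h k y' \<le> int h * int k"
      using weight_prefix_concat_replicate[OF weight_prefix_block[OF assms(1,2)] block blocks(2)] .
    moreover have "0 < int h * int k"
      using assms(1,2) by simp
    ultimately show ?thesis
      using blocks(1) rep by simp
  next
    case (A_tail s)
    have "int k * int s \<le> int k * (2 * int h)"
      using A_tail(2) by (intro mult_left_mono) simp_all
    moreover have "s = 2 * h" if "int k * int s = int k * (2 * int h)"
      using that assms(2) by simp
    ultimately show ?thesis
      using A_tail(1) rep C count_C by (auto simp: algebra_simps)
  next
    case (B_tail t)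
    then show ?thesis
      using rep C count_C assms(1) by (auto simp: algebra_simps)
  qed
qed

lemma prefix_S_word_no_inserted:
  assumes "0 < h" "0 < k" "prefix y (S_word h k n)"
    and "count_list y A = 3 * h + a" "count_list y B = b" "h * b \<le> k * a" "a < (2 + n) * h"
  shows "a = 0 \<and> b = 0"
proof -
  have "int h * int b \<le> int k * int a"
    using assms(6) by (simp only: of_nat_mult[symmetric] of_nat_le_iff)
  then have "3 * int h * int k \<le> weight h k y"
    unfolding weight_def assms(4,5) by (simp add: algebra_simps)
  with weight_prefix_S_word[OF assms(1-3)] have max: "weight h k y = 3 * int h * int k"
    and "count_list y B = 0 \<or> count_list y A = (5 + n) * h"
    by auto
  then have "b = 0"
    using assms(4,5,7) by (auto simp: algebra_simps)
  moreover from this have "a = 0"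
    using max assms(2) unfolding weight_def assms(4,5) by (simp add: algebra_simps)
  ultimately show ?thesis
    by simp
qed

lemma colouring_S_word_drop_A_run:
  assumes "colouring h k c (S_word h k j) (replicate (3 * h) A @ replicate (2 * k) B @ xs)"
    and "0 < h" "0 < k" "inserted c A < (2 + j) * h"
  shows "colouring h k (drop (3 * h) c)
    (replicate (2 * k) B @ concat (replicate j (block h k)) @ replicate (2 * h) A @ replicate (3 * k) B)
    (replicate (2 * k) B @ xs)"
proof -
  have "replicate (2 * k) B = B # replicate (2 * k - 1) B"
    using assms(3) by (cases "2 * k") simp_all
  with assms(1) have c: "well_inserted h k c" "map fst c = S_word h k j"
    and "original c = replicate (3 * h) A @ B # replicate (2 * k - 1) B @ xs"
    by (simp_all add: colouring_def)
  then obtain c1 c2 where split: "c = c1 @ (B, False) # c2" "original c1 = replicate (3 * h) A"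
    using original_eq_append_Cons by metis
  have "admissible h k (inserted c1 A) (inserted c1 B)"
    using c(1) split(1) by (simp add: well_inserted_def)
  moreover have "prefix (map fst c1) (S_word h k j)"
    unfolding c(2)[symmetric] split(1) by simp
  moreover have "inserted c1 A \<le> inserted c A"
    using split(1) by simp
  ultimately have A0: "inserted c1 A = 0" and B0: "inserted c1 B = 0"
    using prefix_S_word_no_inserted[OF assms(2,3), of "map fst c1" j "inserted c1 A" "inserted c1 B"]
      count_list_map_fst[of c1] split(2) assms(4)
    by (auto simp: admissible_def)
  have "length c1 = 3 * h"
    using original_eq_map_fst[OF A0 B0] split(2) by (metis length_map length_replicate)
  then have "take (3 * h) c = c1"
    using split(1) by simp
  moreover have "colouring h k c (replicate (3 * h) A @ replicate (2 * k) B
      @ concat (replicate j (block h k)) @ replicate (2 * h) A @ replicate (3 * k) B)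
      (replicate (3 * h) A @ replicate (2 * k) B @ xs)"
    using assms(1) by (simp add: S_word_eq)
  ultimately show ?thesis
    using colouring_drop_kept[of h k c "replicate (3 * h) A"] A0 B0 by simp
qed

lemma colouring_S_word_drop_head:
  assumes "colouring h k c (S_word h k j) (S_word h k i)" "2 \<le> h" "2 \<le> k"
    and "i \<le> j" "inserted c A < (2 + j) * h"
  obtains d where "colouring h k d
    (concat (replicate (j - i) (block h k)) @ replicate (2 * h) A @ replicate (3 * k) B)
    (replicate (2 * h) A @ replicate (3 * k) B)"
proof -
  let ?P = "\<lambda>n. concat (replicate n (block h k))"
  let ?T = "replicate (2 * h) A @ replicate (3 * k) B"
  have pos: "0 < h" "0 < k"
    using assms(2,3) by simp_all
  have "colouring h k c (S_word h k j) (replicate (3 * h) A @ replicate (2 * k) B @ ?P i @ ?T)"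
    using assms(1) by (simp add: S_word_eq)
  then have "colouring h k (drop (3 * h) c)
      (replicate (2 * k) B @ ?P j @ ?T) (replicate (2 * k) B @ ?P i @ ?T)"
    using colouring_S_word_drop_A_run pos assms(5) by blast
  moreover have "?P j = ?P i @ ?P (j - i)"
    using assms(4) by (metis concat_append le_add_diff_inverse replicate_add)
  ultimately have "colouring h k (drop (3 * h) c)
      (replicate (2 * k) B @ ?P i @ ?P (j - i) @ ?T) (replicate (2 * k) B @ ?P i @ ?T)"
    by simp
  then have "colouring h k (drop (2 * k) (drop (3 * h) c)) (?P i @ ?P (j - i) @ ?T) (?P i @ ?T)"
    using colouring_drop_B_run pos by blast
  then show thesis
    using colouring_drop_blocks assms(2,3) that by blast
qed

lemma colouring_S_word_eq:
  assumes "colouring h k c (S_word h k j) (S_word h k i)" "2 \<le> h" "2 \<le> k"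
  shows "i = j"
proof -
  let ?P = "\<lambda>n. concat (replicate n (block h k))"
  let ?T = "replicate (2 * h) A @ replicate (3 * k) B"
  have pos: "0 < h" "0 < k"
    using assms(2,3) by simp_all
  have count_A: "(5 + j) * h = (5 + i) * h + inserted c A"
    using assms(1) count_list_map_fst[of c A] count_list_S_word[OF pos] by (simp add: colouring_def)
  then have "(5 + i) * h \<le> (5 + j) * h"
    by linarith
  then have "i \<le> j"
    using pos by simp
  have "inserted c A = (j - i) * h"
    using count_A by (simp add: diff_mult_distrib algebra_simps)
  also have "\<dots> < (2 + j) * h"
    using pos by (intro mult_less_mono1) simp_all
  finally obtain d where d: "colouring h k d (?P (j - i) @ ?T) ?T"
    using colouring_S_word_drop_head assms \<open>i \<le> j\<close> by blast
  show "i = j"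
  proof (rule ccontr)
    assume "i \<noteq> j"
    then have "?P (j - i) @ ?T =
        A # B # replicate (h - 1) A @ replicate (k - 1) B @ ?P (j - i - 1) @ ?T"
      using \<open>i \<le> j\<close> by (cases "j - i") (simp_all add: block_def)
    moreover have "?T = A # A # replicate (2 * h - 2) A @ replicate (3 * k) B"
      using assms(2) by (cases h) simp_all
    ultimately show False
      using d not_colouring_AB_AA assms(2) by metis
  qed
qed

theorem lemma3:
  fixes h k i j :: nat
  assumes "h \<ge> 2" and "k \<ge> 2" and "i \<ge> 1" and "j \<ge> 1"
  shows "ins_star {replicate h A @ replicate k B} (S_word h k i) (S_word h k j) \<longleftrightarrow> i = j"
proof
  assume "ins_star {replicate h A @ replicate k B} (S_word h k i) (S_word h k j)"
  then obtain c where "colouring h k c (S_word h k j) (S_word h k i)"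
    using ins_star_colouring by blast
  then show "i = j"
    using colouring_S_word_eq assms(1,2) by blast
next
  assume "i = j"
  then show "ins_star {replicate h A @ replicate k B} (S_word h k i) (S_word h k j)"
    by (simp add: ins_star_def)
qed

end
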